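(* Let $\Delta>0$. For all sufficiently large $n$, every tree $T$ with $n$ vertices and maximum degree at most $\Delta$ satisfies at least one of the following: (A) $\lambda(T)\ge n\log\log n/(10^5\log n)$; (B) $10^3\log n/\log\log n\le k(T)<10^2\log n$; (C) $10^2\log n\le k(T)<10^{-6}\log^2 n/\log\log n$; (D) $k(T)=10^{-6}\log^2 n/\log\log n$.
   Context: $\log$ is the natural logarithm. A path with $\ell$ vertices has length $\ell-1$. A bare path in a tree $T$ is a path in $T$ all of whose interior vertices have degree exactly $2$ in $T$. A set $Q$ of vertices of a graph is $k$-separated if every two distinct vertices of $Q$ are at distance at least $k$ in the graph. For a tree $T$ with $n$ vertices: $\lambda(T)$ is the size of a largest $20$-separated set of leaves of $T$; $k'(T)=\max\{k: T\text{ contains at least } n/(90k) \text{ vertex-disjoint bare paths of length } k\}$; and $k(T)=\min\{k'(T),\,10^{-6}\log^2 n/\log\log n\}$. *)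

theory Defs
  imports Complex_Main
begin

definition graph :: "nat set \<Rightarrow> (nat \<Rightarrow> nat \<Rightarrow> bool) \<Rightarrow> bool" where
  "graph V E \<longleftrightarrow> finite V \<and> (\<forall>x y. E x y \<longrightarrow> x \<in> V \<and> y \<in> V \<and> x \<noteq> y \<and> E y x)"

text \<open>A path is a nonempty list of distinct vertices, consecutive ones adjacent.
A path with l vertices has length l - 1.\<close>
definition is_path :: "nat set \<Rightarrow> (nat \<Rightarrow> nat \<Rightarrow> bool) \<Rightarrow> nat list \<Rightarrow> bool" where
  "is_path V E p \<longleftrightarrow> p \<noteq> [] \<and> distinct p \<and> set p \<subseteq> V \<and>
     (\<forall>i. Suc i < length p \<longrightarrow> E (p ! i) (p ! Suc i))"

definition connected_graph :: "nat set \<Rightarrow> (nat \<Rightarrow> nat \<Rightarrow> bool) \<Rightarrow> bool" where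
  "connected_graph V E \<longleftrightarrow>
     (\<forall>u\<in>V. \<forall>v\<in>V. \<exists>p. is_path V E p \<and> hd p = u \<and> last p = v)"

definition is_cycle :: "nat set \<Rightarrow> (nat \<Rightarrow> nat \<Rightarrow> bool) \<Rightarrow> nat list \<Rightarrow> bool" where
  "is_cycle V E c \<longleftrightarrow> length c \<ge> 3 \<and> is_path V E c \<and> E (last c) (hd c)"

definition is_tree :: "nat set \<Rightarrow> (nat \<Rightarrow> nat \<Rightarrow> bool) \<Rightarrow> bool" where
  "is_tree V E \<longleftrightarrow> graph V E \<and> V \<noteq> {} \<and> connected_graph V E \<and> \<not> (\<exists>c. is_cycle V E c)"

definition degree :: "nat set \<Rightarrow> (nat \<Rightarrow> nat \<Rightarrow> bool) \<Rightarrow> nat \<Rightarrow> nat" where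
  "degree V E v = card {u \<in> V. E v u}"

definition leaves :: "nat set \<Rightarrow> (nat \<Rightarrow> nat \<Rightarrow> bool) \<Rightarrow> nat set" where
  "leaves V E = {v \<in> V. degree V E v = 1}"

definition dist :: "nat set \<Rightarrow> (nat \<Rightarrow> nat \<Rightarrow> bool) \<Rightarrow> nat \<Rightarrow> nat \<Rightarrow> nat" where
  "dist V E u v = (LEAST k. \<exists>p. is_path V E p \<and> hd p = u \<and> last p = v \<and> length p = k + 1)"

definition separated :: "nat set \<Rightarrow> (nat \<Rightarrow> nat \<Rightarrow> bool) \<Rightarrow> nat \<Rightarrow> nat set \<Rightarrow> bool" where
  "separated V E k Q \<longleftrightarrow> (\<forall>u\<in>Q. \<forall>v\<in>Q. u \<noteq> v \<longrightarrow> dist V E u v \<ge> k)"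

definition lam :: "nat set \<Rightarrow> (nat \<Rightarrow> nat \<Rightarrow> bool) \<Rightarrow> nat" where
  "lam V E = Max {card Q | Q. Q \<subseteq> leaves V E \<and> separated V E 20 Q}"

definition bare_path :: "nat set \<Rightarrow> (nat \<Rightarrow> nat \<Rightarrow> bool) \<Rightarrow> nat list \<Rightarrow> bool" where
  "bare_path V E p \<longleftrightarrow> is_path V E p \<and>
     (\<forall>i. 0 < i \<and> i + 1 < length p \<longrightarrow> degree V E (p ! i) = 2)"

text \<open>Division is real division,
so k = 0 is always admissible (n/0 = 0), giving k'(T) = 0 if no k \<ge> 1 works.\<close>
definition kprime :: "nat set \<Rightarrow> (nat \<Rightarrow> nat \<Rightarrow> bool) \<Rightarrow> nat" where
  "kprime V E = Max {k. \<exists>P. finite P \<and>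
       (\<forall>p\<in>P. bare_path V E p \<and> length p = k + 1) \<and>
       (\<forall>p\<in>P. \<forall>q\<in>P. p \<noteq> q \<longrightarrow> set p \<inter> set q = {}) \<and>
       real (card P) \<ge> real (card V) / (90 * real k)}"

definition kT :: "nat set \<Rightarrow> (nat \<Rightarrow> nat \<Rightarrow> bool) \<Rightarrow> real" where
  "kT V E = min (real (kprime V E))
     (ln (real (card V)) ^ 2 / ln (ln (real (card V))) / 10 ^ 6)"

end

theory Submission
  imports Defs "HOL-Real_Asymp.Real_Asymp"
begin

text \<open>Let \<open>N\<close> be the set of vertices whose degree is not 2. Then \<open>|N| < 2|L|\<close> for the
  set \<open>L\<close> of leaves, and covering \<open>L\<close> by balls of radius 19 around a maximal sparse set
  of leaves gives \<open>|L| \<le> (\<Delta> + 1)^19 \<lambda>(T)\<close>. The degree-2 vertices form at most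
  \<open>\<Delta>|N|\<close> bare segments. Removing the vertex at position 20 from each segment with at least
  41 vertices leaves a forest with one more piece than removed vertices; as each piece without
  a leaf sends at least three edges to removed vertices, a third of the pieces contain a leaf,
  and leaves of different pieces are 20-separated because a path between them passes a removed
  vertex and then 20 more degree-2 vertices. Hence there are at most \<open>3\<lambda>(T)\<close> long segments
  and at most \<open>40\<Delta>|N|\<close> vertices in short ones, and cutting the long segments into bare
  paths of length \<open>k\<close> yields at least \<open>(n - O(\<lambda>(T)))/(k + 1) - 3\<lambda>(T)\<close> disjoint ones.
  For \<open>k \<approx> 10^3 log n / log log n\<close> this is at least \<open>n/(90k)\<close> unless (A) holds, and
  \<open>k(T) \<ge> 10^3 log n / log log n\<close> is covered by (B), (C) and (D).\<close>

section \<open>Paths and components\<close>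

definition nbrs :: "nat set \<Rightarrow> (nat \<Rightarrow> nat \<Rightarrow> bool) \<Rightarrow> nat \<Rightarrow> nat set" where
  "nbrs V E v = {u \<in> V. E v u}"

lemma degree_eq_card_nbrs: "degree V E v = card (nbrs V E v)"
  by (simp add: degree_def nbrs_def)

lemma finite_nbrs: "finite V \<Longrightarrow> finite (nbrs V E v)"
  by (simp add: nbrs_def)

lemma graph_sym: "graph V E \<Longrightarrow> E x y \<Longrightarrow> E y x"
  by (simp add: graph_def)

lemma graph_edgeD: "graph V E \<Longrightarrow> E x y \<Longrightarrow> x \<in> V \<and> y \<in> V \<and> x \<noteq> y"
  by (simp add: graph_def)

lemma graph_mem_nbrs_iff: "graph V E \<Longrightarrow> u \<in> nbrs V E v \<longleftrightarrow> E v u"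
  by (auto simp: nbrs_def graph_def)

lemma is_path_ne: "is_path V E p \<Longrightarrow> p \<noteq> []"
  by (simp add: is_path_def)

lemma is_path_single [simp]: "is_path V E [x] \<longleftrightarrow> x \<in> V"
  by (simp add: is_path_def)

lemma is_path_nth_mem: "is_path V E p \<Longrightarrow> i < length p \<Longrightarrow> p ! i \<in> V"
  by (auto simp: is_path_def)

lemma is_path_adj: "is_path V E p \<Longrightarrow> Suc i < length p \<Longrightarrow> E (p ! i) (p ! Suc i)"
  by (simp add: is_path_def)

lemma is_path_distinct: "is_path V E p \<Longrightarrow> distinct p"
  by (simp add: is_path_def)

lemma is_path_set: "is_path V E p \<Longrightarrow> set p \<subseteq> V"
  by (simp add: is_path_def)

lemma is_path_subset: "is_path V E p \<Longrightarrow> set p \<subseteq> W \<Longrightarrow> is_path W E p"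
  by (simp add: is_path_def)

lemma is_path_superset: "is_path W E p \<Longrightarrow> W \<subseteq> V \<Longrightarrow> is_path V E p"
  by (auto simp: is_path_def)

lemma is_path_snoc:
  assumes "is_path V E p" "y \<in> V" "y \<notin> set p" "E (last p) y"
  shows "is_path V E (p @ [y])"
  using assms unfolding is_path_def
  by (auto simp: nth_append last_conv_nth less_Suc_eq) (metis One_nat_def diff_Suc_1)

lemma is_path_Cons:
  assumes "is_path V E p" "y \<in> V" "y \<notin> set p" "E y (hd p)"
  shows "is_path V E (y # p)"
  using assms unfolding is_path_def
  by (auto simp: hd_conv_nth nth_Cons split: nat.split)

lemma is_path_take: "is_path V E p \<Longrightarrow> 0 < j \<Longrightarrow> is_path V E (take j p)"
  unfolding is_path_def by (auto dest: in_set_takeD)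

lemma is_path_drop: "is_path V E p \<Longrightarrow> j < length p \<Longrightarrow> is_path V E (drop j p)"
  unfolding is_path_def by (auto dest: in_set_dropD)

lemma is_path_rev:
  assumes "graph V E" "is_path V E p"
  shows "is_path V E (rev p)"
  unfolding is_path_def
proof (intro conjI allI impI)
  fix i assume i: "Suc i < length (rev p)"
  have "E (p ! (length p - Suc (Suc i))) (p ! (length p - Suc i))"
    using is_path_adj[OF assms(2), of "length p - Suc (Suc i)"] i by (simp add: Suc_diff_Suc)
  then show "E (rev p ! i) (rev p ! Suc i)"
    using i assms(1) by (auto simp: rev_nth graph_def)
qed (use assms in \<open>auto simp: is_path_def\<close>)

lemma is_path_length_le: "is_path V E p \<Longrightarrow> finite V \<Longrightarrow> length p \<le> card V"
  unfolding is_path_def by (metis card_mono distinct_card)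

lemma is_path_length_ge_2: "is_path V E p \<Longrightarrow> hd p \<noteq> last p \<Longrightarrow> 2 \<le> length p"
  by (cases p) (auto simp: is_path_def Suc_le_eq)

lemma longest_path_exists:
  assumes "finite V" "is_path V E p0" "Q p0"
  obtains p where "is_path V E p" "Q p" "\<And>q. is_path V E q \<Longrightarrow> Q q \<Longrightarrow> length q \<le> length p"
proof -
  have "\<forall>q. is_path V E q \<and> Q q \<longrightarrow> length q < Suc (card V)"
    using is_path_length_le[OF _ assms(1)] by (auto simp: less_Suc_eq_le)
  then show ?thesis
    using ex_has_greatest_nat[of "\<lambda>p. is_path V E p \<and> Q p" p0 length "Suc (card V)"] assms(2,3) that
    by blast
qed

lemma path_exits_set:
  assumes "is_path V E p" "hd p \<in> W" "last p \<notin> W"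
  shows "\<exists>i. Suc i < length p \<and> set (take (Suc i) p) \<subseteq> W \<and> p ! Suc i \<notin> W"
proof -
  define j where "j = (LEAST j. j < length p \<and> p ! j \<notin> W)"
  have "length p - 1 < length p \<and> p ! (length p - 1) \<notin> W"
    using assms(3) is_path_ne[OF assms(1)] by (simp add: last_conv_nth)
  then have j: "j < length p \<and> p ! j \<notin> W" unfolding j_def by (rule LeastI)
  have "p ! i \<in> W" if "i < j" for i
    using not_less_Least[OF that[unfolded j_def]] that j by auto
  then have "set (take j p) \<subseteq> W" by (auto simp: in_set_conv_nth)
  moreover have "j \<noteq> 0" using j assms(2) is_path_ne[OF assms(1)] by (metis hd_conv_nth)
  ultimately show ?thesis using j by (intro exI[of _ "j - 1"]) simp
qed

definition restr :: "(nat \<Rightarrow> nat \<Rightarrow> bool) \<Rightarrow> nat set \<Rightarrow> nat \<Rightarrow> nat \<Rightarrow> bool" where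
  "restr E W a b \<longleftrightarrow> E a b \<and> a \<in> W \<and> b \<in> W"

lemma is_path_restr_iff: "is_path W (restr E W) p \<longleftrightarrow> is_path W E p"
  unfolding is_path_def restr_def by (metis Suc_lessD nth_mem subsetD)

lemma reachable_imp_path:
  assumes "(restr E W)\<^sup>*\<^sup>* x y" "x \<in> W"
  shows "\<exists>p. is_path W E p \<and> hd p = x \<and> last p = y"
  using assms
proof (induction rule: rtranclp_induct)
  case base
  then show ?case by (intro exI[of _ "[x]"]) auto
next
  case (step y z)
  then obtain p where p: "is_path W E p" "hd p = x" "last p = y" by auto
  have zW: "z \<in> W" and yz: "E y z" using step(2) by (auto simp: restr_def)
  show ?case
  proof (cases "z \<in> set p")
    case True
    then obtain i where i: "i < length p" "p ! i = z" by (auto simp: in_set_conv_nth)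
    have "is_path W E (take (Suc i) p)" by (rule is_path_take[OF p(1)]) simp
    moreover have "hd (take (Suc i) p) = x" using p i by (metis hd_take is_path_ne zero_less_Suc)
    moreover have "last (take (Suc i) p) = z" using i by (simp add: take_Suc_conv_app_nth)
    ultimately show ?thesis by blast
  next
    case False
    have "is_path W E (p @ [z])" using p zW False yz by (intro is_path_snoc) auto
    moreover have "hd (p @ [z]) = x" using p is_path_ne by fastforce
    ultimately show ?thesis by (intro exI[of _ "p @ [z]"]) auto
  qed
qed

lemma path_imp_reachable:
  assumes "is_path W E p" "i < length p"
  shows "(restr E W)\<^sup>*\<^sup>* (hd p) (p ! i)"
  using assms(2)
proof (induction i)
  case 0
  then show ?case using assms(1) by (simp add: hd_conv_nth is_path_ne)
next
  case (Suc i)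
  have "restr E W (p ! i) (p ! Suc i)"
    using assms(1) Suc.prems by (auto simp: restr_def is_path_def)
  then show ?case using Suc by (meson Suc_lessD rtranclp.rtrancl_into_rtrancl)
qed

lemma path_imp_reachable_last: "is_path W E p \<Longrightarrow> (restr E W)\<^sup>*\<^sup>* (hd p) (last p)"
  using path_imp_reachable[of W E p "length p - 1"] by (simp add: last_conv_nth is_path_ne)

lemma reachable_sym:
  assumes "graph V E" "(restr E W)\<^sup>*\<^sup>* a b"
  shows "(restr E W)\<^sup>*\<^sup>* b a"
  using assms(2)
proof (induction rule: rtranclp_induct)
  case (step y z)
  then have "restr E W z y" using graph_sym[OF assms(1)] by (auto simp: restr_def)
  then show ?case using step.IH by (rule converse_rtranclp_into_rtranclp)
qed simp

lemma reachable_mem: "(restr E W)\<^sup>*\<^sup>* a b \<Longrightarrow> a \<in> W \<Longrightarrow> b \<in> W"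
  by (induction rule: rtranclp_induct) (auto simp: restr_def)

definition component :: "(nat \<Rightarrow> nat \<Rightarrow> bool) \<Rightarrow> nat set \<Rightarrow> nat \<Rightarrow> nat set" where
  "component E W x = {y. (restr E W)\<^sup>*\<^sup>* x y}"

definition components :: "(nat \<Rightarrow> nat \<Rightarrow> bool) \<Rightarrow> nat set \<Rightarrow> nat set set" where
  "components E W = component E W ` W"

lemma component_subset: "x \<in> W \<Longrightarrow> component E W x \<subseteq> W"
  unfolding component_def using reachable_mem by blast

lemma component_self: "x \<in> component E W x"
  by (simp add: component_def)

lemma components_subset: "C \<in> components E W \<Longrightarrow> C \<subseteq> W"
  unfolding components_def using component_subset by blast

lemma components_nonempty: "C \<in> components E W \<Longrightarrow> C \<noteq> {}"
  unfolding components_def using component_self by blast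

lemma finite_components: "finite W \<Longrightarrow> finite (components E W)"
  by (simp add: components_def)

lemma finite_components_mem: "finite W \<Longrightarrow> C \<in> components E W \<Longrightarrow> finite C"
  by (meson components_subset finite_subset)

lemma Union_components: "\<Union>(components E W) = W"
proof
  show "\<Union>(components E W) \<subseteq> W" using components_subset by blast
  show "W \<subseteq> \<Union>(components E W)" unfolding components_def using component_self by blast
qed

context
  fixes V E
  assumes graph: "graph V E"
begin

lemma components_eq_component:
  assumes "C \<in> components E W" "y \<in> C"
  shows "C = component E W y"
proof -
  obtain x where C: "C = component E W x" using assms(1) by (auto simp: components_def)
  then have xy: "(restr E W)\<^sup>*\<^sup>* x y" using assms(2) by (simp add: component_def)
  moreover have "(restr E W)\<^sup>*\<^sup>* y x" by (rule reachable_sym[OF graph xy])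
  ultimately show ?thesis unfolding C component_def by (blast intro: rtranclp_trans)
qed

lemma components_disjoint:
  "C \<in> components E W \<Longrightarrow> C' \<in> components E W \<Longrightarrow> C \<noteq> C' \<Longrightarrow> C \<inter> C' = {}"
  using components_eq_component by blast

lemma components_reachable:
  "C \<in> components E W \<Longrightarrow> x \<in> C \<Longrightarrow> (restr E W)\<^sup>*\<^sup>* x y \<Longrightarrow> y \<in> C"
  using components_eq_component by (auto simp: component_def)

lemma components_path_subset:
  assumes "C \<in> components E W" "is_path W E p" "hd p \<in> C"
  shows "set p \<subseteq> C"
  using components_reachable[OF assms(1,3) path_imp_reachable[OF assms(2)]]
  by (auto simp: in_set_conv_nth)

lemma components_edge_mem:
  "C \<in> components E W \<Longrightarrow> x \<in> C \<Longrightarrow> y \<in> W \<Longrightarrow> E x y \<Longrightarrow> y \<in> C"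
  by (metis components_reachable components_subset r_into_rtranclp restr_def subsetD)

lemma components_connected:
  assumes "C \<in> components E W" "u \<in> C" "v \<in> C"
  shows "\<exists>p. is_path C E p \<and> hd p = u \<and> last p = v"
proof -
  have "(restr E W)\<^sup>*\<^sup>* u v"
    using components_eq_component[OF assms(1,2)] assms(3) by (simp add: component_def)
  then obtain p where p: "is_path W E p" "hd p = u" "last p = v"
    using reachable_imp_path components_subset[OF assms(1)] assms(2) by blast
  then show ?thesis
    using components_path_subset[OF assms(1) p(1)] assms(2) is_path_subset by blast
qed

lemma sum_over_components:
  assumes "finite W"
  shows "(\<Sum>v\<in>W. f v) = (\<Sum>C\<in>components E W. \<Sum>v\<in>C. f v)"
proof -
  have "(\<Sum>v\<in>\<Union>(components E W). f v) = (\<Sum>C\<in>components E W. \<Sum>v\<in>C. f v)"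
    using sum.Union_disjoint[of "components E W" f] finite_components_mem[OF assms]
      components_disjoint by simp
  then show ?thesis by (simp add: Union_components)
qed

end

section \<open>Trees\<close>

lemma degree_restr:
  assumes "graph V E" "finite V" "W \<subseteq> V" "v \<in> W"
  shows "degree V E v = degree W (restr E W) v + card (nbrs V E v - W)"
proof -
  have "nbrs W (restr E W) v = nbrs V E v \<inter> W"
    using assms(3,4) by (auto simp: nbrs_def restr_def)
  then show ?thesis
    using card_Int_Diff[OF finite_nbrs[OF assms(2)], of E v W] by (simp add: degree_eq_card_nbrs)
qed

locale tree =
  fixes V :: "nat set" and E :: "nat \<Rightarrow> nat \<Rightarrow> bool"
  assumes is_tree: "is_tree V E"
begin

lemma graph: "graph V E"
  using is_tree by (simp add: is_tree_def)

lemma finite_V: "finite V"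
  using graph by (simp add: graph_def)

lemma connected: "u \<in> V \<Longrightarrow> v \<in> V \<Longrightarrow> \<exists>p. is_path V E p \<and> hd p = u \<and> last p = v"
  using is_tree by (auto simp: is_tree_def connected_graph_def)

lemma edge_sym: "E x y \<Longrightarrow> E y x"
  using graph_sym[OF graph] .

lemma edgeD: "E x y \<Longrightarrow> x \<in> V \<and> y \<in> V \<and> x \<noteq> y"
  using graph_edgeD[OF graph] .

lemma mem_nbrs_iff [simp]: "u \<in> nbrs V E v \<longleftrightarrow> E v u"
  using graph_mem_nbrs_iff[OF graph] .

lemma no_closing_edge: "is_path V E p \<Longrightarrow> 3 \<le> length p \<Longrightarrow> \<not> E (last p) (hd p)"
  using is_tree by (auto simp: is_tree_def is_cycle_def)

lemma longest_path_last_nbrs: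
  assumes p: "is_path V E p" "2 \<le> length p"
    and longest: "\<And>q. is_path V E q \<Longrightarrow> length q \<le> length p"
  shows "nbrs V E (last p) = {p ! (length p - 2)}"
proof -
  define n where "n = length p"
  have last: "last p = p ! (n - 1)"
    using is_path_ne[OF p(1)] by (simp add: last_conv_nth n_def)
  have "Suc (n - 2) = n - 1" using p(2) by (simp add: n_def)
  then have "E (p ! (n - 2)) (last p)"
    using is_path_adj[OF p(1), of "n - 2"] p(2) by (simp add: last n_def)
  moreover have "y = p ! (n - 2)" if y: "E (last p) y" for y
  proof -
    have "y \<in> set p"
      using longest[OF is_path_snoc[OF p(1) _ _ y]] edgeD[OF y] by fastforce
    then obtain j where j: "j < n" "p ! j = y" by (auto simp: in_set_conv_nth n_def)
    have "j \<noteq> n - 1" using j edgeD[OF y] last by auto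
    moreover have "\<not> j + 3 \<le> n"
    proof
      assume "j + 3 \<le> n"
      then have "is_path V E (drop j p)" "3 \<le> length (drop j p)"
        using is_path_drop[OF p(1), of j] j by (auto simp: n_def)
      moreover have "hd (drop j p) = y" "last (drop j p) = last p"
        using j by (auto simp: hd_drop_conv_nth n_def)
      ultimately show False using no_closing_edge y by metis
    qed
    ultimately have "j = n - 2" using j(1) by linarith
    then show ?thesis using j(2) by simp
  qed
  ultimately show ?thesis using edge_sym by (auto simp: n_def)
qed

lemma leaf_exists:
  assumes "2 \<le> card V"
  obtains l w where "l \<in> V" "nbrs V E l = {w}"
proof -
  obtain u v where uv: "u \<in> V" "v \<in> V" "u \<noteq> v"
    using assms finite_V by (metis card_le_Suc0_iff_eq not_less_eq_eq numeral_2_eq_2)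
  obtain p0 where p0: "is_path V E p0" "hd p0 = u" "last p0 = v"
    using connected[OF uv(1,2)] by blast
  obtain p where p: "is_path V E p" and longest: "\<And>q. is_path V E q \<Longrightarrow> length q \<le> length p"
    by (rule longest_path_exists[OF finite_V p0(1), of "\<lambda>_. True"]) auto
  have "2 \<le> length p"
    using longest[OF p0(1)] is_path_length_ge_2[OF p0(1)] p0 uv(3) by simp
  moreover have "last p \<in> V" using p by (auto simp: is_path_def)
  ultimately show ?thesis using that longest_path_last_nbrs[OF p _ longest] by blast
qed

lemma degree_ge_1:
  assumes "2 \<le> card V" "v \<in> V"
  shows "1 \<le> degree V E v"
proof -
  obtain u where u: "u \<in> V" "u \<noteq> v"
    using assms finite_V by (metis card_le_Suc0_iff_eq not_less_eq_eq numeral_2_eq_2)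
  obtain p where p: "is_path V E p" "hd p = v" "last p = u"
    using connected[OF assms(2) u(1)] by blast
  have "2 \<le> length p" using is_path_length_ge_2[OF p(1)] p u(2) by simp
  then have "E v (p ! 1)"
    using is_path_adj[OF p(1), of 0] p(2) is_path_ne[OF p(1)] by (simp add: hd_conv_nth)
  then have "nbrs V E v \<noteq> {}" by auto
  then show ?thesis
    using finite_nbrs[OF finite_V] by (simp add: degree_eq_card_nbrs Suc_le_eq card_gt_0_iff)
qed

lemma tree_induced:
  assumes W: "W \<subseteq> V" "W \<noteq> {}"
    and conn: "\<And>u v. u \<in> W \<Longrightarrow> v \<in> W \<Longrightarrow> \<exists>p. is_path W E p \<and> hd p = u \<and> last p = v"
  shows "tree W (restr E W)"
proof
  have "graph W (restr E W)"
    using finite_subset[OF W(1) finite_V] graph by (auto simp: graph_def restr_def)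
  moreover have "connected_graph W (restr E W)"
    unfolding connected_graph_def is_path_restr_iff using conn by blast
  moreover have "\<not> is_cycle W (restr E W) c" for c
    using no_closing_edge is_path_subset[of W E c V] W(1)
    by (auto simp: is_cycle_def is_path_restr_iff restr_def is_path_def)
  ultimately show "is_tree W (restr E W)" using W(2) by (simp add: is_tree_def)
qed

lemma tree_remove_leaf:
  assumes "2 \<le> card V" "l \<in> V" "nbrs V E l = {w}"
  shows "tree (V - {l}) (restr E (V - {l}))"
proof (rule tree_induced)
  have "card (V - {l}) \<noteq> 0" using assms(1,2) finite_V by simp
  then show "V - {l} \<noteq> {}" by (metis card.empty)
  fix u v assume u: "u \<in> V - {l}" and v: "v \<in> V - {l}"
  obtain p where p: "is_path V E p" "hd p = u" "last p = v" using connected u v by blast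
  have "l \<notin> set p"
  proof
    assume "l \<in> set p"
    then obtain i where i: "i < length p" "p ! i = l" by (auto simp: in_set_conv_nth)
    have "i \<noteq> 0" using i p(2) u is_path_ne[OF p(1)] by (metis DiffD2 hd_conv_nth singletonI)
    moreover have "i \<noteq> length p - 1"
      using i p(3) v is_path_ne[OF p(1)] by (metis DiffD2 last_conv_nth singletonI)
    ultimately have "0 < i" "Suc i < length p" using i(1) by auto
    then have "p ! (i - 1) \<in> nbrs V E l" "p ! Suc i \<in> nbrs V E l"
      using is_path_adj[OF p(1), of "i - 1"] is_path_adj[OF p(1), of i] i edge_sym by auto
    moreover have "p ! (i - 1) \<noteq> p ! Suc i"
      using is_path_distinct[OF p(1)] \<open>Suc i < length p\<close> by (simp add: nth_eq_iff_index_eq)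
    ultimately show False using assms(3) by auto
  qed
  then have "is_path (V - {l}) E p"
    using p(1) is_path_subset by (metis Diff_empty is_path_def subset_Diff_insert)
  then show "\<exists>p. is_path (V - {l}) E p \<and> hd p = u \<and> last p = v" using p by blast
qed auto

lemma tree_component:
  assumes "W \<subseteq> V" "C \<in> components E W"
  shows "tree C (restr E C)"
proof (rule tree_induced)
  show "C \<subseteq> V" using components_subset[OF assms(2)] assms(1) by blast
  show "C \<noteq> {}" using components_nonempty[OF assms(2)] .
qed (rule components_connected[OF graph assms(2)])

end

lemma tree_degree_sum: "tree V E \<Longrightarrow> (\<Sum>v\<in>V. degree V E v) + 2 = 2 * card V"
proof (induction "card V" arbitrary: V E)
  case 0
  then show ?case
    using tree.finite_V[OF 0(2)] 0(2) by (simp add: tree_def is_tree_def)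
next
  case (Suc m)
  interpret tree V E by (fact Suc.prems)
  show ?case
  proof (cases "m = 0")
    case True
    then have "card V = 1" using Suc(2) by simp
    then obtain x where V: "V = {x}" by (rule card_1_singletonE)
    then have "nbrs V E x = {}" using edgeD by (auto simp: nbrs_def)
    then show ?thesis using V by (simp add: degree_eq_card_nbrs)
  next
    case False
    then have two: "2 \<le> card V" using Suc(2) by simp
    obtain l w where l: "l \<in> V" "nbrs V E l = {w}" using leaf_exists[OF two] .
    let ?V' = "V - {l}"
    have "E l w" using l(2) mem_nbrs_iff by blast
    then have w: "w \<in> ?V'" using edgeD by blast
    have "m = card ?V'" using Suc(2) l(1) finite_V by simp
    note IH = Suc(1)[OF this tree_remove_leaf[OF two l]]
    have "E v l \<longleftrightarrow> v = w" for v using l(2) edge_sym mem_nbrs_iff by blast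
    then have "nbrs V E v - ?V' = (if v = w then {l} else {})" if "v \<in> ?V'" for v
      using l(1) by (auto simp: nbrs_def)
    then have "degree V E v = degree ?V' (restr E ?V') v + (if v = w then 1 else 0)"
      if "v \<in> ?V'" for v
      using degree_restr[OF graph finite_V, of ?V' v] that by simp
    then have "(\<Sum>v\<in>?V'. degree V E v) = (\<Sum>v\<in>?V'. degree ?V' (restr E ?V') v) + 1"
      using w finite_V by (simp add: sum.distrib)
    moreover have "(\<Sum>v\<in>V. degree V E v) = 1 + (\<Sum>v\<in>?V'. degree V E v)"
      using l finite_V by (simp add: sum.remove degree_eq_card_nbrs)
    ultimately show ?thesis using IH l(1) finite_V two by simp
  qed
qed

section \<open>Leaves and separated sets\<close>

definition path_ball :: "nat set \<Rightarrow> (nat \<Rightarrow> nat \<Rightarrow> bool) \<Rightarrow> nat \<Rightarrow> nat \<Rightarrow> nat set" where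
  "path_ball V E q r = {v. \<exists>p. is_path V E p \<and> hd p = q \<and> last p = v \<and> length p \<le> Suc r}"

lemma path_ball_subset: "path_ball V E q r \<subseteq> V"
  unfolding path_ball_def by (auto simp: is_path_def dest!: is_path_ne)

lemma path_ball_self: "q \<in> V \<Longrightarrow> q \<in> path_ball V E q r"
  unfolding path_ball_def by (intro CollectI exI[of _ "[q]"]) simp

lemma path_ball_sym:
  assumes "graph V E" "v \<in> path_ball V E q r"
  shows "q \<in> path_ball V E v r"
proof -
  obtain p where p: "is_path V E p" "hd p = q" "last p = v" "length p \<le> Suc r"
    using assms(2) by (auto simp: path_ball_def)
  then have "is_path V E (rev p) \<and> hd (rev p) = v \<and> last (rev p) = q \<and> length (rev p) \<le> Suc r"
    using is_path_rev[OF assms(1) p(1)] is_path_ne[OF p(1)] by (simp add: hd_rev last_rev)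
  then show ?thesis unfolding path_ball_def by blast
qed

lemma path_ball_0: "path_ball V E q 0 \<subseteq> {q}"
  unfolding path_ball_def by (auto dest!: is_path_ne simp: le_Suc_eq length_Suc_conv)

lemma path_ball_Suc:
  "path_ball V E q (Suc r) \<subseteq> path_ball V E q r \<union> (\<Union>u\<in>path_ball V E q r. nbrs V E u)"
proof
  fix v assume "v \<in> path_ball V E q (Suc r)"
  then obtain p where p: "is_path V E p" "hd p = q" "last p = v" "length p \<le> Suc (Suc r)"
    by (auto simp: path_ball_def)
  show "v \<in> path_ball V E q r \<union> (\<Union>u\<in>path_ball V E q r. nbrs V E u)"
  proof (cases "length p \<le> Suc r")
    case True
    then show ?thesis using p unfolding path_ball_def by blast
  next
    case False
    then have lp: "length p = Suc (Suc r)" using p(4) by simp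
    have "is_path V E (take (Suc r) p)" by (rule is_path_take[OF p(1)]) simp
    moreover have "hd (take (Suc r) p) = q" using p(2) is_path_ne[OF p(1)] by simp
    moreover have "last (take (Suc r) p) = p ! r" using lp by (simp add: take_Suc_conv_app_nth)
    ultimately have "p ! r \<in> path_ball V E q r" unfolding path_ball_def by fastforce
    moreover have "v \<in> nbrs V E (p ! r)"
      using is_path_adj[OF p(1), of r] is_path_nth_mem[OF p(1), of "Suc r"] p(3) lp
        is_path_ne[OF p(1)] by (simp add: nbrs_def last_conv_nth)
    ultimately show ?thesis by blast
  qed
qed

lemma card_path_ball_le:
  assumes "finite V" "\<forall>v\<in>V. degree V E v \<le> D"
  shows "card (path_ball V E q r) \<le> (D + 1) ^ r"
proof (induction r)
  case 0
  then show ?case using card_mono[of "{q}" "path_ball V E q 0"] path_ball_0 by simp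
next
  case (Suc r)
  let ?B = "path_ball V E q r"
  have fin: "finite ?B" using finite_subset[OF path_ball_subset assms(1)] .
  have "card (path_ball V E q (Suc r)) \<le> card (?B \<union> (\<Union>u\<in>?B. nbrs V E u))"
    by (rule card_mono) (use fin finite_nbrs[OF assms(1)] path_ball_Suc in auto)
  also have "\<dots> \<le> card ?B + (\<Sum>u\<in>?B. card (nbrs V E u))"
    using card_Un_le card_UN_le[OF fin] add_left_mono order_trans by blast
  also have "(\<Sum>u\<in>?B. card (nbrs V E u)) \<le> card ?B * D"
    using sum_mono[of ?B "\<lambda>u. card (nbrs V E u)" "\<lambda>_. D"] assms(2) path_ball_subset
    by (fastforce simp: degree_eq_card_nbrs)
  finally have "card (path_ball V E q (Suc r)) \<le> card ?B * (D + 1)" by simp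
  also have "\<dots> \<le> (D + 1) ^ r * (D + 1)" by (rule mult_right_mono[OF Suc.IH]) simp
  finally show ?case by (simp add: mult.commute)
qed

definition sparse :: "nat set \<Rightarrow> (nat \<Rightarrow> nat \<Rightarrow> bool) \<Rightarrow> nat \<Rightarrow> nat set \<Rightarrow> bool" where
  "sparse V E r Q \<longleftrightarrow> (\<forall>a\<in>Q. \<forall>b\<in>Q. a \<noteq> b \<longrightarrow> b \<notin> path_ball V E a r)"

lemma sparse_insert:
  assumes "graph V E" "sparse V E r Q" "l \<notin> (\<Union>a\<in>Q. path_ball V E a r)"
  shows "sparse V E r (insert l Q)"
  using assms path_ball_sym[OF assms(1)] unfolding sparse_def by blast

context tree
begin

lemma shortest_path_exists:
  assumes "u \<in> V" "v \<in> V"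
  obtains p where "is_path V E p" "hd p = u" "last p = v" "length p = dist V E u v + 1"
proof -
  obtain p where p: "is_path V E p" "hd p = u" "last p = v" using connected[OF assms] by blast
  then have "\<exists>k p. is_path V E p \<and> hd p = u \<and> last p = v \<and> length p = k + 1"
    using is_path_ne by (metis Suc_eq_plus1 Suc_pred length_greater_0_conv)
  then have "\<exists>p. is_path V E p \<and> hd p = u \<and> last p = v \<and> length p = dist V E u v + 1"
    unfolding dist_def by (rule LeastI_ex)
  then show ?thesis using that by blast
qed

lemma dist_ge:
  assumes "u \<in> V" "v \<in> V"
    and "\<And>p. is_path V E p \<Longrightarrow> hd p = u \<Longrightarrow> last p = v \<Longrightarrow> t + 1 \<le> length p"
  shows "t \<le> dist V E u v"
  using shortest_path_exists[OF assms(1,2)] assms(3) by (metis add_le_cancel_right)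

lemma card_le_lam: "Q \<subseteq> leaves V E \<Longrightarrow> separated V E 20 Q \<Longrightarrow> card Q \<le> lam V E"
  unfolding lam_def
  by (rule Max_ge)
     (auto intro: finite_subset[of _ "card ` Pow (leaves V E)"] simp: leaves_def finite_V)

lemma separated_if_sparse:
  assumes "Q \<subseteq> V" "sparse V E r Q"
  shows "separated V E (Suc r) Q"
  unfolding separated_def
proof (intro ballI impI)
  fix a b assume ab: "a \<in> Q" "b \<in> Q" "a \<noteq> b"
  show "Suc r \<le> dist V E a b"
  proof (rule dist_ge)
    fix p assume "is_path V E p" "hd p = a" "last p = b"
    then show "Suc r + 1 \<le> length p"
      using assms(2) ab unfolding sparse_def path_ball_def by fastforce
  qed (use assms(1) ab in auto)
qed

lemma sparse_cover_exists:
  assumes "L \<subseteq> V"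
  obtains Q where "Q \<subseteq> L" "sparse V E r Q" "L \<subseteq> (\<Union>a\<in>Q. path_ball V E a r)"
proof -
  have bounded: "\<forall>Q. Q \<subseteq> L \<and> sparse V E r Q \<longrightarrow> card Q < Suc (card V)"
    using assms by (meson card_mono[OF finite_V] less_Suc_eq_le subset_trans)
  obtain Q where Q: "Q \<subseteq> L" "sparse V E r Q"
    and max: "\<And>Q'. Q' \<subseteq> L \<and> sparse V E r Q' \<Longrightarrow> card Q' \<le> card Q"
    using ex_has_greatest_nat[OF _ bounded, of "{}"] by (auto simp: sparse_def)
  have "l \<in> (\<Union>a\<in>Q. path_ball V E a r)" if l: "l \<in> L" for l
  proof (rule ccontr)
    assume far: "l \<notin> (\<Union>a\<in>Q. path_ball V E a r)"
    then have "l \<notin> Q" using path_ball_self[of l V E r] l assms by blast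
    moreover have "insert l Q \<subseteq> L \<and> sparse V E r (insert l Q)"
      using sparse_insert[OF graph Q(2) far] Q(1) l by blast
    moreover have "finite Q" using finite_subset[OF _ finite_V] Q(1) assms by blast
    ultimately show False using max[of "insert l Q"] by simp
  qed
  then show ?thesis using that Q by blast
qed

lemma card_leaves_le:
  assumes "\<forall>v\<in>V. degree V E v \<le> D"
  shows "card (leaves V E) \<le> (D + 1) ^ 19 * lam V E"
proof -
  have LV: "leaves V E \<subseteq> V" by (auto simp: leaves_def)
  obtain Q where Q: "Q \<subseteq> leaves V E" "sparse V E 19 Q"
    and cover: "leaves V E \<subseteq> (\<Union>a\<in>Q. path_ball V E a 19)"
    using sparse_cover_exists[OF LV] .
  have finQ: "finite Q" using finite_subset[OF _ finite_V] Q(1) LV by blast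
  have "card (leaves V E) \<le> card (\<Union>a\<in>Q. path_ball V E a 19)"
    using finQ finite_subset[OF path_ball_subset finite_V] by (intro card_mono[OF _ cover]) auto
  also have "\<dots> \<le> (\<Sum>a\<in>Q. card (path_ball V E a 19))" by (rule card_UN_le[OF finQ])
  also have "\<dots> \<le> (D + 1) ^ 19 * card Q"
    using sum_mono[of Q _ "\<lambda>_. (D + 1) ^ 19"] card_path_ball_le[OF finite_V assms]
    by (simp add: mult.commute)
  also have "card Q \<le> lam V E"
    using card_le_lam[OF Q(1)] separated_if_sparse[OF _ Q(2)] Q(1) LV
    by (simp add: numeral_eq_Suc)
  finally show ?thesis by simp
qed

end

section \<open>Bare segments\<close>

definition deg2 :: "nat set \<Rightarrow> (nat \<Rightarrow> nat \<Rightarrow> bool) \<Rightarrow> nat set" where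
  "deg2 V E = {v \<in> V. degree V E v = 2}"

definition segments :: "nat set \<Rightarrow> (nat \<Rightarrow> nat \<Rightarrow> bool) \<Rightarrow> nat set set" where
  "segments V E = components E (deg2 V E)"

definition segment_path :: "nat set \<Rightarrow> (nat \<Rightarrow> nat \<Rightarrow> bool) \<Rightarrow> nat set \<Rightarrow> nat list" where
  "segment_path V E X = (SOME p. is_path V E p \<and> set p = X)"

lemma deg2_nbr_cases:
  assumes "finite V" "degree V E z = 2" "a \<in> nbrs V E z" "b \<in> nbrs V E z" "a \<noteq> b"
    "c \<in> nbrs V E z"
  shows "c = a \<or> c = b"
proof (rule ccontr)
  assume "\<not> ?thesis"
  then have "card {a, b, c} = 3" using assms(5) by simp
  moreover have "card {a, b, c} \<le> card (nbrs V E z)"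
    using assms(3,4,6) by (intro card_mono[OF finite_nbrs[OF assms(1)]]) auto
  ultimately show False using assms(2) by (simp add: degree_eq_card_nbrs)
qed

context tree
begin

lemma deg2_subset: "deg2 V E \<subseteq> V"
  by (auto simp: deg2_def)

lemma segments_subset_deg2: "X \<in> segments V E \<Longrightarrow> X \<subseteq> deg2 V E"
  unfolding segments_def by (rule components_subset)

lemma finite_segments: "finite (segments V E)"
  unfolding segments_def using finite_components finite_subset[OF deg2_subset finite_V] by blast

lemma segments_disjoint: "X \<in> segments V E \<Longrightarrow> Y \<in> segments V E \<Longrightarrow> X \<noteq> Y \<Longrightarrow> X \<inter> Y = {}"
  unfolding segments_def by (rule components_disjoint[OF graph])

lemma longest_path_in_deg2_set_closed:
  assumes X: "X \<subseteq> deg2 V E" and p: "is_path V E p" "set p \<subseteq> X"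
    and longest: "\<And>q. is_path V E q \<Longrightarrow> set p \<subseteq> set q \<Longrightarrow> set q \<subseteq> X \<Longrightarrow> length q \<le> length p"
    and z: "z \<in> set p" "E z y" "y \<in> X"
  shows "y \<in> set p"
proof (rule ccontr)
  assume yp: "y \<notin> set p"
  have yV: "y \<in> V" using edgeD[OF z(2)] by simp
  obtain i where i: "i < length p" "p ! i = z" using z(1) by (auto simp: in_set_conv_nth)
  consider "i = length p - 1" | "i = 0" | "0 < i" "i < length p - 1" using i by linarith
  then show False
  proof cases
    case 1
    then have "last p = z" using i is_path_ne[OF p(1)] by (simp add: last_conv_nth)
    then show False using longest[OF is_path_snoc[OF p(1) yV yp]] z p(2) by auto
  next
    case 2
    then have "hd p = z" using i is_path_ne[OF p(1)] by (simp add: hd_conv_nth)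
    then show False using longest[OF is_path_Cons[OF p(1) yV yp]] edge_sym[OF z(2)] z p(2) by auto
  next
    case 3
    have "p ! (i - 1) \<in> nbrs V E z" "p ! Suc i \<in> nbrs V E z"
      using is_path_adj[OF p(1), of "i - 1"] is_path_adj[OF p(1), of i] 3 i edge_sym by auto
    moreover have "p ! (i - 1) \<noteq> p ! Suc i" "y \<noteq> p ! (i - 1)" "y \<noteq> p ! Suc i"
      using is_path_distinct[OF p(1)] yp 3 by (auto simp: nth_eq_iff_index_eq)
    moreover have "degree V E z = 2" using z(1) p(2) X by (auto simp: deg2_def)
    ultimately show False using deg2_nbr_cases[OF finite_V] z(2) by (metis mem_nbrs_iff)
  qed
qed

lemma segment_path_exists:
  assumes X: "X \<in> segments V E"
  shows "\<exists>p. is_path V E p \<and> set p = X"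
proof -
  obtain x where x: "x \<in> deg2 V E" and Xx: "X = component E (deg2 V E) x"
    using X by (auto simp: segments_def components_def)
  have "x \<in> X" using Xx component_self by metis
  moreover have "is_path V E [x]" using x deg2_subset by auto
  ultimately obtain p where p: "is_path V E p" "x \<in> set p \<and> set p \<subseteq> X"
    and longest: "\<And>q. is_path V E q \<Longrightarrow> x \<in> set q \<and> set q \<subseteq> X \<Longrightarrow> length q \<le> length p"
    using longest_path_exists[OF finite_V, of E "[x]" "\<lambda>q. x \<in> set q \<and> set q \<subseteq> X"] by auto
  note closed = longest_path_in_deg2_set_closed[OF segments_subset_deg2[OF X] p(1)]
  have "y \<in> set p" if "(restr E (deg2 V E))\<^sup>*\<^sup>* x y" for y
    using that
  proof (induction rule: rtranclp_induct)
    case (step y z)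
    then have "z \<in> X" using Xx by (auto simp: component_def)
    then show ?case using closed[OF _ _ step.IH] longest p(2) step(2) by (auto simp: restr_def)
  qed (use p in simp)
  then have "X \<subseteq> set p" using Xx by (auto simp: component_def)
  then show ?thesis using p by blast
qed

lemma segment_path:
  assumes "X \<in> segments V E"
  shows "is_path V E (segment_path V E X)" "set (segment_path V E X) = X"
    "length (segment_path V E X) = card X"
proof -
  show "is_path V E (segment_path V E X)" "set (segment_path V E X) = X"
    unfolding segment_path_def using someI_ex[OF segment_path_exists[OF assms]] by auto
  then show "length (segment_path V E X) = card X"
    by (metis distinct_card is_path_distinct)
qed

lemma segment_exit_exists:
  assumes "2 \<le> card V" "X \<in> segments V E"
  shows "\<exists>b\<in>V - deg2 V E. \<exists>a\<in>X. E b a"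
proof -
  obtain l w where l: "l \<in> V" "nbrs V E l = {w}" using leaf_exists[OF assms(1)] .
  then have l_out: "l \<notin> deg2 V E" by (simp add: deg2_def degree_eq_card_nbrs)
  obtain x where x: "x \<in> X" using components_nonempty[of X E] assms(2) by (auto simp: segments_def)
  then have xV: "x \<in> deg2 V E" using segments_subset_deg2[OF assms(2)] by blast
  obtain p where p: "is_path V E p" "hd p = x" "last p = l"
    using connected[OF _ l(1)] xV deg2_subset by blast
  then obtain i where i: "Suc i < length p" "set (take (Suc i) p) \<subseteq> deg2 V E" "p ! Suc i \<notin> deg2 V E"
    using path_exits_set[of V E p "deg2 V E"] xV l_out by blast
  have "is_path (deg2 V E) E (take (Suc i) p)"
    using is_path_take[OF p(1)] i(2) is_path_subset by blast
  then have "set (take (Suc i) p) \<subseteq> X"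
    using components_path_subset[OF graph assms(2)[unfolded segments_def]] p(2) x
      is_path_ne[OF p(1)] by simp
  moreover have "p ! i \<in> set (take (Suc i) p)" using i(1) by (simp add: take_Suc_conv_app_nth)
  ultimately have "p ! i \<in> X" by blast
  moreover have "E (p ! Suc i) (p ! i)" using is_path_adj[OF p(1) i(1)] edge_sym by blast
  ultimately show ?thesis using i(3) is_path_nth_mem[OF p(1) i(1)] by blast
qed

lemma card_segments_le:
  assumes "2 \<le> card V" "\<forall>v\<in>V. degree V E v \<le> D"
  shows "card (segments V E) \<le> D * card (V - deg2 V E)"
proof -
  let ?N = "V - deg2 V E"
  let ?S = "Sigma ?N (nbrs V E)"
  define f where "f X = (SOME e. e \<in> ?S \<and> snd e \<in> X)" for X
  have f: "f X \<in> ?S \<and> snd (f X) \<in> X" if X: "X \<in> segments V E" for X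
  proof -
    obtain b a where "b \<in> ?N" "a \<in> X" "E b a" using segment_exit_exists[OF assms(1) X] by blast
    then have "(b, a) \<in> ?S \<and> snd (b, a) \<in> X" by simp
    then show ?thesis unfolding f_def by (rule someI)
  qed
  have "inj_on f (segments V E)"
  proof (rule inj_onI)
    fix X Y assume X: "X \<in> segments V E" and Y: "Y \<in> segments V E" and "f X = f Y"
    then have "snd (f X) \<in> X \<inter> Y" using f[OF X] f[OF Y] by simp
    then show "X = Y" using segments_disjoint[OF X Y] by blast
  qed
  moreover have "f ` segments V E \<subseteq> ?S" using f by blast
  moreover have "finite ?S" using finite_V finite_nbrs[OF finite_V] by blast
  ultimately have "card (segments V E) \<le> card ?S" by (rule card_inj_on_le)
  also have "\<dots> = (\<Sum>b\<in>?N. degree V E b)"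
    unfolding degree_eq_card_nbrs using finite_V finite_nbrs[OF finite_V] by (simp add: card_SigmaI)
  also have "\<dots> \<le> D * card ?N"
    using sum_mono[of ?N "degree V E" "\<lambda>_. D"] assms(2) by (auto simp: mult.commute)
  finally show ?thesis .
qed

lemma card_non_deg2_le: "2 \<le> card V \<Longrightarrow> card (V - deg2 V E) + 2 \<le> 2 * card (leaves V E)"
proof -
  assume two: "2 \<le> card V"
  let ?L = "leaves V E" and ?D = "deg2 V E"
  have LV: "?L \<subseteq> V" and DV: "?D \<subseteq> V" by (auto simp: leaves_def deg2_def)
  have "3 \<le> degree V E v + 2 * of_bool (v \<in> ?L) + of_bool (v \<in> ?D)" if "v \<in> V" for v
    using degree_ge_1[OF two that] that by (auto simp: leaves_def deg2_def)
  then have "(\<Sum>v\<in>V. 3) \<le> (\<Sum>v\<in>V. degree V E v + 2 * of_bool (v \<in> ?L) + of_bool (v \<in> ?D))"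
    by (rule sum_mono)
  then have "3 * card V \<le> (\<Sum>v\<in>V. degree V E v + 2 * of_bool (v \<in> ?L) + of_bool (v \<in> ?D))"
    by (simp add: mult.commute)
  also have "\<dots> = (\<Sum>v\<in>V. degree V E v) + 2 * card ?L + card ?D"
    using finite_V LV DV by (simp add: sum.distrib sum_distrib_left[symmetric] Int_absorb1
        Int_absorb2 Collect_mem_eq)
  finally show ?thesis
    using tree_degree_sum[OF tree_axioms] card_Diff_subset[OF finite_subset[OF DV finite_V] DV]
      card_mono[OF finite_V DV] by linarith
qed

end

definition chunk :: "'a list \<Rightarrow> nat \<Rightarrow> nat \<Rightarrow> 'a list" where
  "chunk p m j = take m (drop (j * m) p)"

lemma length_chunk: "(j + 1) * m \<le> length p \<Longrightarrow> length (chunk p m j) = m"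
  by (simp add: chunk_def algebra_simps)

lemma set_chunk_subset: "set (chunk p m j) \<subseteq> set p"
  unfolding chunk_def by (meson in_set_dropD in_set_takeD subsetI)

lemma is_path_chunk: "is_path V E p \<Longrightarrow> 0 < m \<Longrightarrow> (j + 1) * m \<le> length p \<Longrightarrow> is_path V E (chunk p m j)"
  unfolding chunk_def by (intro is_path_take is_path_drop) (auto simp: algebra_simps)

lemma mem_chunk: "x \<in> set (chunk p m j) \<Longrightarrow> \<exists>a<length p. a div m = j \<and> x = p ! a"
proof -
  assume "x \<in> set (chunk p m j)"
  then obtain i where i: "i < m" "j * m + i < length p" "x = p ! (j * m + i)"
    by (auto simp: chunk_def in_set_conv_nth add.commute)
  then have "(j * m + i) div m = j" by (simp add: div_add1_eq)
  then show ?thesis using i by blast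
qed

lemma chunks_disjoint:
  assumes "distinct p" "j \<noteq> j'"
  shows "set (chunk p m j) \<inter> set (chunk p m j') = {}"
  using mem_chunk[of _ p m j] mem_chunk[of _ p m j'] assms by (fastforce simp: nth_eq_iff_index_eq)

definition segment_chunks :: "nat set \<Rightarrow> (nat \<Rightarrow> nat \<Rightarrow> bool) \<Rightarrow> nat \<Rightarrow> nat set \<Rightarrow> nat list set" where
  "segment_chunks V E m X = chunk (segment_path V E X) m ` {..< card X div m}"

definition bare_chunks :: "nat set \<Rightarrow> (nat \<Rightarrow> nat \<Rightarrow> bool) \<Rightarrow> nat \<Rightarrow> nat list set" where
  "bare_chunks V E m = (\<Union>X\<in>segments V E. segment_chunks V E m X)"

lemma mult_le_if_less_div: "0 < (m::nat) \<Longrightarrow> j < n div m \<Longrightarrow> (j + 1) * m \<le> n"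
  by (simp add: less_eq_div_iff_mult_less_eq less_iff_succ_less_eq)

context tree
begin

lemma segment_chunk:
  assumes "0 < m" "X \<in> segments V E" "q \<in> segment_chunks V E m X"
  shows "bare_path V E q" "length q = m" "set q \<subseteq> X"
proof -
  obtain j where j: "j < card X div m" and q: "q = chunk (segment_path V E X) m j"
    using assms(3) by (auto simp: segment_chunks_def)
  note path = segment_path[OF assms(2)]
  have fits: "(j + 1) * m \<le> length (segment_path V E X)"
    using mult_le_if_less_div[OF assms(1) j] path(3) by simp
  show "length q = m" using length_chunk[OF fits] q by simp
  show sub: "set q \<subseteq> X" using set_chunk_subset path(2) q by metis
  have "\<forall>x\<in>set q. degree V E x = 2"
    using sub segments_subset_deg2[OF assms(2)] by (auto simp: deg2_def)
  then show "bare_path V E q"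
    using is_path_chunk[OF path(1) assms(1) fits] q by (auto simp: bare_path_def)
qed

lemma card_segment_chunks:
  assumes "0 < m" "X \<in> segments V E"
  shows "card (segment_chunks V E m X) = card X div m"
proof -
  let ?p = "segment_path V E X"
  have "inj_on (chunk ?p m) {..< card X div m}"
  proof (rule inj_onI, rule ccontr)
    fix j j' assume j: "j \<in> {..< card X div m}" and eq: "chunk ?p m j = chunk ?p m j'" and "j \<noteq> j'"
    then have "set (chunk ?p m j) \<inter> set (chunk ?p m j') = {}"
      using chunks_disjoint[OF is_path_distinct[OF segment_path(1)[OF assms(2)]]] by blast
    then have "set (chunk ?p m j) = {}" using eq by simp
    moreover have "length (chunk ?p m j) = m"
      using mult_le_if_less_div[OF assms(1)] j segment_path(3)[OF assms(2)]
      by (intro length_chunk) simp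
    ultimately show False using assms(1) by simp
  qed
  then show ?thesis by (simp add: segment_chunks_def card_image)
qed

lemma bare_chunks_disjoint:
  assumes "0 < m" "p \<in> bare_chunks V E m" "q \<in> bare_chunks V E m" "p \<noteq> q"
  shows "set p \<inter> set q = {}"
proof -
  obtain X Y where X: "X \<in> segments V E" "p \<in> segment_chunks V E m X"
    and Y: "Y \<in> segments V E" "q \<in> segment_chunks V E m Y"
    using assms(2,3) by (auto simp: bare_chunks_def)
  show ?thesis
  proof (cases "X = Y")
    case True
    then obtain j j' where
      "p = chunk (segment_path V E X) m j" "q = chunk (segment_path V E X) m j'"
      using X Y by (auto simp: segment_chunks_def)
    moreover have "j \<noteq> j'" using calculation assms(4) by auto
    ultimately show ?thesis
      using chunks_disjoint[OF is_path_distinct[OF segment_path(1)[OF X(1)]]] by simp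
  next
    case False
    then show ?thesis
      using segments_disjoint[OF X(1) Y(1)] segment_chunk(3)[OF assms(1)] X Y by blast
  qed
qed

lemma card_bare_chunks:
  assumes "0 < m"
  shows "card (bare_chunks V E m) = (\<Sum>X\<in>segments V E. card X div m)"
proof -
  have disj: "segment_chunks V E m X \<inter> segment_chunks V E m Y = {}"
    if XY: "X \<in> segments V E" "Y \<in> segments V E" "X \<noteq> Y" for X Y
  proof (rule ccontr)
    assume "\<not> ?thesis"
    then obtain q where q: "q \<in> segment_chunks V E m X" "q \<in> segment_chunks V E m Y" by blast
    have "q \<noteq> []" using segment_chunk(2)[OF assms XY(1) q(1)] assms by auto
    then have "hd q \<in> X \<inter> Y"
      using segment_chunk(3)[OF assms XY(1) q(1)] segment_chunk(3)[OF assms XY(2) q(2)] by auto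
    then show False using segments_disjoint[OF XY] by blast
  qed
  have "card (bare_chunks V E m) = (\<Sum>X\<in>segments V E. card (segment_chunks V E m X))"
    unfolding bare_chunks_def
  proof (rule card_UN_disjoint[OF finite_segments])
    show "\<forall>X\<in>segments V E. finite (segment_chunks V E m X)" by (simp add: segment_chunks_def)
    show "\<forall>X\<in>segments V E. \<forall>Y\<in>segments V E. X \<noteq> Y \<longrightarrow>
        segment_chunks V E m X \<inter> segment_chunks V E m Y = {}"
      using disj by blast
  qed
  then show ?thesis using card_segment_chunks[OF assms] by simp
qed

lemma kprime_ge:
  assumes "0 < k" "real (card V) / (90 * real k) \<le> real (card (bare_chunks V E (k + 1)))"
  shows "k \<le> kprime V E"
proof -
  define K where "K = {k. \<exists>P. finite P \<and> (\<forall>p\<in>P. bare_path V E p \<and> length p = k + 1) \<and>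
    (\<forall>p\<in>P. \<forall>q\<in>P. p \<noteq> q \<longrightarrow> set p \<inter> set q = {}) \<and> real (card V) / (90 * real k) \<le> real (card P)}"
  have "k \<in> K"
    unfolding K_def
  proof (intro CollectI exI conjI)
    show "finite (bare_chunks V E (k + 1))"
      unfolding bare_chunks_def segment_chunks_def using finite_segments by blast
    show "\<forall>p\<in>bare_chunks V E (k + 1). bare_path V E p \<and> length p = k + 1"
      unfolding bare_chunks_def using segment_chunk[of "k + 1"] by simp
    show "\<forall>p\<in>bare_chunks V E (k + 1). \<forall>q\<in>bare_chunks V E (k + 1). p \<noteq> q \<longrightarrow> set p \<inter> set q = {}"
      using bare_chunks_disjoint[of "k + 1"] by simp
  qed (rule assms(2))
  moreover have "K \<subseteq> {..card V}"
  proof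
    fix j assume "j \<in> K"
    then obtain P where P: "\<forall>p\<in>P. bare_path V E p \<and> length p = j + 1"
      "real (card V) / (90 * real j) \<le> real (card P)" by (auto simp: K_def)
    have "0 < card V" using is_tree finite_V by (auto simp: is_tree_def)
    then have "P \<noteq> {}" if "0 < j" using P(2) that by (auto simp: divide_le_0_iff)
    then show "j \<in> {..card V}"
    proof (cases "j = 0")
      case False
      then obtain p where "p \<in> P" using \<open>0 < j \<Longrightarrow> P \<noteq> {}\<close> by blast
      then show ?thesis using P(1) is_path_length_le[OF _ finite_V] by (force simp: bare_path_def)
    qed simp
  qed
  ultimately show ?thesis unfolding kprime_def K_def[symmetric]
    using finite_subset[OF _ finite_atMost] by (blast intro: Max_ge)
qed

end

section \<open>Cutting the long segments\<close>

definition long_segments :: "nat set \<Rightarrow> (nat \<Rightarrow> nat \<Rightarrow> bool) \<Rightarrow> nat set set" where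
  "long_segments V E = {X \<in> segments V E. 41 \<le> card X}"

text \<open>A long segment has at least 41 vertices, so its vertex at position 20 is followed and
  preceded by at least 20 further vertices of degree 2.\<close>

definition midpoint :: "nat set \<Rightarrow> (nat \<Rightarrow> nat \<Rightarrow> bool) \<Rightarrow> nat set \<Rightarrow> nat" where
  "midpoint V E X = segment_path V E X ! 20"

definition midpoints :: "nat set \<Rightarrow> (nat \<Rightarrow> nat \<Rightarrow> bool) \<Rightarrow> nat set" where
  "midpoints V E = midpoint V E ` long_segments V E"

lemma path_follows_deg2_path:
  assumes G: "graph V E" "finite V" and r: "is_path V E r" "\<forall>x\<in>set r. degree V E x = 2"
    and p: "is_path V E p" "degree V E (last p) \<noteq> 2"
    and enter: "Suc i < length p" "p ! i = r ! s" "p ! Suc i = r ! Suc s"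
  shows "s + j < length r \<Longrightarrow> i + j < length p \<and> p ! (i + j) = r ! (s + j)"
proof (induction j rule: less_induct)
  case (less j)
  consider "j = 0" | "j = 1" | j' where "j = Suc (Suc j')"
    by (metis One_nat_def not0_implies_Suc)
  then show ?case
  proof cases
    case 3
    have prev: "i + j' < length p" "p ! (i + j') = r ! (s + j')"
      "i + Suc j' < length p" "p ! (i + Suc j') = r ! (s + Suc j')"
      using less.IH[of j'] less.IH[of "Suc j'"] less.prems 3 by auto
    define z where "z = r ! (s + Suc j')"
    have z: "degree V E z = 2" using r(2) less.prems 3 by (simp add: z_def)
    have "i + Suc j' \<noteq> length p - 1"
      using prev(3,4) p(2) z is_path_ne[OF p(1)] by (metis last_conv_nth z_def)
    then have len: "i + j < length p" using prev(3) 3 by simp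
    have "E z (p ! (i + j))" "E z (r ! (s + j'))" "E z (r ! (s + j))"
      using is_path_adj[OF p(1), of "i + Suc j'"] is_path_adj[OF r(1), of "s + j'"]
        is_path_adj[OF r(1), of "s + Suc j'"] len less.prems prev(4) graph_sym[OF G(1)] 3
      by (auto simp: z_def)
    moreover have "r ! (s + j') \<noteq> r ! (s + j)"
      using is_path_distinct[OF r(1)] less.prems 3 by (simp add: nth_eq_iff_index_eq)
    moreover have "p ! (i + j) \<noteq> p ! (i + j')"
      using is_path_distinct[OF p(1)] len 3 by (simp add: nth_eq_iff_index_eq)
    then have "p ! (i + j) \<noteq> r ! (s + j')" using prev(2) by simp
    ultimately show ?thesis
      using deg2_nbr_cases[OF G(2) z] len graph_mem_nbrs_iff[OF G(1)] by metis
  qed (use enter in auto)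
qed

lemma path_through_deg2_path:
  assumes G: "graph V E" "finite V" and r: "is_path V E r" "\<forall>x\<in>set r. degree V E x = 2"
    and p: "is_path V E p" "degree V E (last p) \<noteq> 2"
    and i: "i < length p" "p ! i = r ! s" and s: "0 < s" "Suc s < length r"
  shows "i + min s (length r - Suc s) < length p"
proof -
  have z: "degree V E (r ! s) = 2" using r(2) s by simp
  have "i \<noteq> length p - 1"
  proof
    assume "i = length p - 1"
    then have "last p = r ! s" using i is_path_ne[OF p(1)] by (simp add: last_conv_nth)
    then show False using p(2) z by simp
  qed
  then have next_i: "Suc i < length p" using i(1) by linarith
  have "p ! Suc i = r ! (s - 1) \<or> p ! Suc i = r ! Suc s"
  proof (rule deg2_nbr_cases[OF G(2) z])
    show "r ! (s - 1) \<in> nbrs V E (r ! s)" "r ! Suc s \<in> nbrs V E (r ! s)"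
      "p ! Suc i \<in> nbrs V E (r ! s)"
      using is_path_adj[OF r(1), of "s - 1"] is_path_adj[OF r(1), of s] is_path_adj[OF p(1) next_i]
        i(2) s graph_sym[OF G(1)] graph_mem_nbrs_iff[OF G(1)] by auto
    show "r ! (s - 1) \<noteq> r ! Suc s"
      using is_path_distinct[OF r(1)] s by (simp add: nth_eq_iff_index_eq)
  qed
  then show ?thesis
  proof
    assume "p ! Suc i = r ! Suc s"
    then have "i + (length r - Suc s) < length p"
      using path_follows_deg2_path[OF G r p next_i i(2), of "length r - Suc s"] s by simp
    then show ?thesis by simp
  next
    assume "p ! Suc i = r ! (s - 1)"
    moreover have "rev r ! (length r - Suc s) = r ! s"
      "rev r ! Suc (length r - Suc s) = r ! (s - 1)"
      using s by (simp_all add: rev_nth Suc_diff_Suc)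
    ultimately have "i + s < length p"
      using path_follows_deg2_path[OF G is_path_rev[OF G(1) r(1)] _ p next_i,
          of "length r - Suc s" s] r(2) i(2) s by simp
    then show ?thesis by simp
  qed
qed

context tree
begin

lemma long_segment_path:
  assumes "X \<in> long_segments V E"
  shows "is_path V E (segment_path V E X)" "set (segment_path V E X) = X"
    "41 \<le> length (segment_path V E X)"
  using segment_path[of X] assms by (auto simp: long_segments_def)

lemma midpoint_mem: "X \<in> long_segments V E \<Longrightarrow> midpoint V E X \<in> X"
  using nth_mem[of 20 "segment_path V E X"] long_segment_path[of X] by (simp add: midpoint_def)

lemma midpoints_subset_deg2: "midpoints V E \<subseteq> deg2 V E"
  using midpoint_mem segments_subset_deg2 by (auto simp: midpoints_def long_segments_def)

lemma card_midpoints: "card (midpoints V E) = card (long_segments V E)"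
proof -
  have "inj_on (midpoint V E) (long_segments V E)"
  proof (rule inj_onI)
    fix X Y assume X: "X \<in> long_segments V E" and Y: "Y \<in> long_segments V E"
      and eq: "midpoint V E X = midpoint V E Y"
    have "midpoint V E X \<in> X \<inter> Y" using midpoint_mem[OF X] midpoint_mem[OF Y] eq by simp
    then show "X = Y" using segments_disjoint X Y by (auto simp: long_segments_def)
  qed
  then show ?thesis by (simp add: midpoints_def card_image)
qed

lemma midpoints_reachable_eq:
  assumes "m \<in> midpoints V E" "m' \<in> midpoints V E" "(restr E (deg2 V E))\<^sup>*\<^sup>* m m'"
  shows "m = m'"
proof -
  obtain X Y where X: "X \<in> long_segments V E" "m = midpoint V E X"
    and Y: "Y \<in> long_segments V E" "m' = midpoint V E Y"
    using assms(1,2) by (auto simp: midpoints_def)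
  have "m' \<in> X"
    using components_reachable[OF graph, of X] assms(3) midpoint_mem[OF X(1)] X
    by (auto simp: long_segments_def segments_def)
  then have "X = Y"
    using segments_disjoint midpoint_mem[OF Y(1)] X(1) Y by (auto simp: long_segments_def)
  then show ?thesis using X Y by simp
qed

lemma midpoints_not_adjacent:
  assumes "m \<in> midpoints V E" "m' \<in> midpoints V E"
  shows "\<not> E m m'"
proof
  assume "E m m'"
  then have "restr E (deg2 V E) m m'"
    using assms midpoints_subset_deg2 by (auto simp: restr_def)
  then have "(restr E (deg2 V E))\<^sup>*\<^sup>* m m'" by (rule r_into_rtranclp)
  then show False using midpoints_reachable_eq[OF assms] edgeD[OF \<open>E m m'\<close>] by simp
qed

lemma midpoint_far_from_leaves:
  assumes "m \<in> midpoints V E" "is_path V E p" "i < length p" "p ! i = m"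
    "degree V E (last p) = 1"
  shows "i + 20 < length p"
proof -
  obtain X where X: "X \<in> long_segments V E" "m = midpoint V E X"
    using assms(1) by (auto simp: midpoints_def)
  note r = long_segment_path[OF X(1)]
  have "\<forall>x\<in>set (segment_path V E X). degree V E x = 2"
    using r(2) segments_subset_deg2 X(1) by (auto simp: long_segments_def deg2_def)
  then show ?thesis
    using path_through_deg2_path[OF graph finite_V r(1) _ assms(2) _ assms(3), of 20] r(3) X(2)
      assms(4,5) by (simp add: midpoint_def)
qed

end

definition pieces :: "nat set \<Rightarrow> (nat \<Rightarrow> nat \<Rightarrow> bool) \<Rightarrow> nat set set" where
  "pieces V E = components E (V - midpoints V E)"

definition exits :: "nat set \<Rightarrow> (nat \<Rightarrow> nat \<Rightarrow> bool) \<Rightarrow> nat set \<Rightarrow> nat" where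
  "exits V E C = (\<Sum>v\<in>C. card (nbrs V E v \<inter> midpoints V E))"

definition leafy_pieces :: "nat set \<Rightarrow> (nat \<Rightarrow> nat \<Rightarrow> bool) \<Rightarrow> nat set set" where
  "leafy_pieces V E = {C \<in> pieces V E. \<exists>v\<in>C. degree V E v = 1}"

lemma sum_card_nbrs_Int_independent:
  assumes "graph V E" "finite V" "M \<subseteq> V" "\<forall>m\<in>M. \<forall>m'\<in>M. \<not> E m m'"
  shows "(\<Sum>v\<in>V - M. card (nbrs V E v \<inter> M)) = (\<Sum>m\<in>M. degree V E m)"
proof -
  have M: "finite M" using finite_subset[OF assms(3,2)] .
  have "nbrs V E v = {u. E v u}" for v using graph_mem_nbrs_iff[OF assms(1)] by blast
  then have "card (nbrs V E v \<inter> M) = (\<Sum>m\<in>M. of_bool (E v m))" for v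
    using M by (simp add: Int_commute)
  then have "(\<Sum>v\<in>V - M. card (nbrs V E v \<inter> M)) = (\<Sum>v\<in>V - M. \<Sum>m\<in>M. of_bool (E v m))"
    by simp
  also have "\<dots> = (\<Sum>m\<in>M. \<Sum>v\<in>V - M. of_bool (E v m))" by (rule sum.swap)
  also have "\<dots> = (\<Sum>m\<in>M. degree V E m)"
  proof (rule sum.cong)
    fix m assume "m \<in> M"
    have "nbrs V E m = (V - M) \<inter> {v. E v m}"
      using \<open>m \<in> M\<close> assms(4) graph_mem_nbrs_iff[OF assms(1)] graph_sym[OF assms(1)]
        graph_edgeD[OF assms(1)] by blast
    then show "(\<Sum>v\<in>V - M. of_bool (E v m)) = degree V E m"
      using assms(2) by (simp add: degree_eq_card_nbrs)
  qed simp
  finally show ?thesis .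
qed

context tree
begin

lemma pieces_subset: "C \<in> pieces V E \<Longrightarrow> C \<subseteq> V - midpoints V E"
  unfolding pieces_def by (rule components_subset)

lemma finite_pieces: "finite (pieces V E)"
  unfolding pieces_def using finite_V by (simp add: finite_components)

lemma pieces_disjoint: "C \<in> pieces V E \<Longrightarrow> C' \<in> pieces V E \<Longrightarrow> C \<noteq> C' \<Longrightarrow> C \<inter> C' = {}"
  unfolding pieces_def by (rule components_disjoint[OF graph])

lemma nbrs_outside_piece:
  assumes "C \<in> pieces V E" "v \<in> C"
  shows "nbrs V E v - C = nbrs V E v \<inter> midpoints V E"
proof
  show "nbrs V E v - C \<subseteq> nbrs V E v \<inter> midpoints V E"
  proof
    fix u assume u: "u \<in> nbrs V E v - C"
    then have "u \<in> V" "E v u" by (auto simp: nbrs_def)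
    then show "u \<in> nbrs V E v \<inter> midpoints V E"
      using u components_edge_mem[OF graph assms(1)[unfolded pieces_def] assms(2)] by blast
  qed
  show "nbrs V E v \<inter> midpoints V E \<subseteq> nbrs V E v - C" using pieces_subset[OF assms(1)] by blast
qed

lemma piece_degree_sum:
  assumes "C \<in> pieces V E"
  shows "(\<Sum>v\<in>C. degree V E v) + 2 = 2 * card C + exits V E C"
proof -
  have CV: "C \<subseteq> V" using pieces_subset[OF assms] by blast
  have "(\<Sum>v\<in>C. degree V E v) = (\<Sum>v\<in>C. degree C (restr E C) v) + exits V E C"
    unfolding exits_def
    using degree_restr[OF graph finite_V CV] nbrs_outside_piece[OF assms] by (simp add: sum.distrib)
  moreover have "tree C (restr E C)"
    using tree_component[of "V - midpoints V E" C] assms by (auto simp: pieces_def)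
  ultimately show ?thesis using tree_degree_sum by simp
qed

lemma sum_exits: "(\<Sum>C\<in>pieces V E. exits V E C) = 2 * card (midpoints V E)"
proof -
  have "(\<Sum>C\<in>pieces V E. exits V E C) = (\<Sum>v\<in>V - midpoints V E. card (nbrs V E v \<inter> midpoints V E))"
    unfolding exits_def pieces_def using finite_V
    by (intro sum_over_components[OF graph, symmetric]) simp
  also have "\<dots> = (\<Sum>m\<in>midpoints V E. degree V E m)"
    using midpoints_subset_deg2 deg2_subset midpoints_not_adjacent
    by (intro sum_card_nbrs_Int_independent[OF graph finite_V]) auto
  also have "\<dots> = 2 * card (midpoints V E)"
    using midpoints_subset_deg2 by (simp add: deg2_def subset_iff)
  finally show ?thesis .
qed

lemma card_pieces: "card (pieces V E) = card (midpoints V E) + 1"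
proof -
  let ?M = "midpoints V E" and ?W = "V - midpoints V E" and ?P = "pieces V E"
  have MV: "?M \<subseteq> V" using midpoints_subset_deg2 deg2_subset by blast
  have sumW: "(\<Sum>C\<in>?P. \<Sum>v\<in>C. f v) = (\<Sum>v\<in>?W. f v)" for f :: "nat \<Rightarrow> nat"
    using sum_over_components[OF graph, of ?W f] finite_V by (simp add: pieces_def)
  have "(\<Sum>v\<in>?W. degree V E v) + 2 * card ?P = (\<Sum>C\<in>?P. (\<Sum>v\<in>C. degree V E v) + 2)"
    unfolding sum.distrib sumW by simp
  also have "\<dots> = (\<Sum>C\<in>?P. 2 * card C + exits V E C)"
    using piece_degree_sum by simp
  also have "\<dots> = 2 * card ?W + 2 * card ?M"
    unfolding sum.distrib sum_exits sum_distrib_left[symmetric] using sumW[of "\<lambda>_. 1"] by simp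
  finally have "(\<Sum>v\<in>?W. degree V E v) + 2 * card ?P = 2 * card ?W + 2 * card ?M" .
  moreover have "(\<Sum>v\<in>V. degree V E v) = (\<Sum>v\<in>?W. degree V E v) + 2 * card ?M"
    using sum.subset_diff[OF MV finite_V, of "degree V E"] midpoints_subset_deg2
    by (simp add: deg2_def subset_iff)
  moreover have "card ?W + card ?M = card V"
    using card_Diff_subset[OF finite_subset[OF MV finite_V] MV] card_mono[OF finite_V MV] by simp
  ultimately show ?thesis using tree_degree_sum[OF tree_axioms] by linarith
qed

lemma path_ends_adjacent_to_outside:
  assumes "is_path V E q" "m \<notin> set q" "E (hd q) m" "E (last q) m"
  shows "hd q = last q"
proof (rule ccontr)
  assume "hd q \<noteq> last q"
  then have "3 \<le> length (q @ [m])" using is_path_length_ge_2[OF assms(1)] by simp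
  moreover have "is_path V E (q @ [m])"
    using is_path_snoc[OF assms(1) _ assms(2,4)] edgeD[OF assms(4)] by simp
  ultimately show False
    using no_closing_edge edge_sym[OF assms(3)] is_path_ne[OF assms(1)] by fastforce
qed

text \<open>Exits of a piece consisting of degree-2 vertices all lead to the same midpoint, since
  the midpoints they reach are joined through degree-2 vertices; two exits to the same
  midpoint would close a cycle.\<close>

lemma exits_le_1_if_deg2:
  assumes C: "C \<in> pieces V E" "C \<subseteq> deg2 V E"
  shows "exits V E C \<le> 1"
proof -
  let ?M = "midpoints V E"
  let ?S = "Sigma C (\<lambda>v. nbrs V E v \<inter> ?M)"
  have CV: "C \<subseteq> V" using pieces_subset[OF C(1)] by blast
  have "exits V E C = card ?S"
    unfolding exits_def using finite_subset[OF CV finite_V] finite_nbrs[OF finite_V]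
    by (simp add: card_SigmaI)
  moreover have "finite ?S" using finite_subset[OF CV finite_V] finite_nbrs[OF finite_V] by blast
  moreover have "x = y" if S: "x \<in> ?S" "y \<in> ?S" for x y
  proof -
    obtain a m b m' where xy: "x = (a, m)" "y = (b, m')" and a: "a \<in> C" "E a m" "m \<in> ?M"
      and b: "b \<in> C" "E b m'" "m' \<in> ?M"
      using S by (auto simp: nbrs_def)
    obtain q where q: "is_path C E q" "hd q = a" "last q = b"
      using components_connected[OF graph C(1)[unfolded pieces_def] a(1) b(1)] by blast
    have "restr E (deg2 V E) m a" "restr E (deg2 V E) b m'"
      using a b C(2) midpoints_subset_deg2 edge_sym by (auto simp: restr_def)
    moreover have "(restr E (deg2 V E))\<^sup>*\<^sup>* a b"
      using path_imp_reachable_last[OF is_path_superset[OF q(1) C(2)]] q by simp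
    ultimately have "(restr E (deg2 V E))\<^sup>*\<^sup>* m m'"
      by (meson converse_rtranclp_into_rtranclp rtranclp.rtrancl_into_rtrancl)
    then have "m = m'" using midpoints_reachable_eq a(3) b(3) by blast
    moreover have "is_path V E q" using is_path_superset[OF q(1) CV] .
    moreover have "m \<notin> set q" using is_path_set[OF q(1)] a(3) pieces_subset[OF C(1)] by blast
    ultimately have "a = b" using path_ends_adjacent_to_outside[of q m] q a b by simp
    then show "x = y" using xy \<open>m = m'\<close> by simp
  qed
  ultimately show ?thesis using card_le_Suc0_iff_eq by (metis One_nat_def)
qed

lemma exits_ge_3:
  assumes "2 \<le> card V" "C \<in> pieces V E" "\<forall>v\<in>C. degree V E v \<noteq> 1"
  shows "3 \<le> exits V E C"
proof -
  have CV: "C \<subseteq> V" using pieces_subset[OF assms(2)] by blast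
  have finC: "finite C" using finite_subset[OF CV finite_V] .
  have ge2: "2 \<le> degree V E v" if "v \<in> C" for v
    using degree_ge_1[OF assms(1)] assms(3) CV that by fastforce
  show ?thesis
  proof (cases "C \<subseteq> deg2 V E")
    case True
    then have "(\<Sum>v\<in>C. degree V E v) = 2 * card C" by (simp add: deg2_def subset_iff)
    then show ?thesis
      using piece_degree_sum[OF assms(2)] exits_le_1_if_deg2[OF assms(2) True] by simp
  next
    case False
    then obtain u where u: "u \<in> C" "degree V E u \<noteq> 2" using CV by (auto simp: deg2_def)
    have "(\<Sum>v\<in>C - {u}. 2) \<le> (\<Sum>v\<in>C - {u}. degree V E v)" by (rule sum_mono) (simp add: ge2)
    moreover have "3 \<le> degree V E u" using ge2[OF u(1)] u(2) by simp
    ultimately have "2 * card C + 1 \<le> (\<Sum>v\<in>C. degree V E v)"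
      using sum.remove[OF finC u(1), of "degree V E"] u(1) finC
      by (simp add: card_Diff_singleton)
    then show ?thesis using piece_degree_sum[OF assms(2)] by simp
  qed
qed

lemma card_midpoints_le_leafy:
  assumes "2 \<le> card V"
  shows "card (midpoints V E) + 3 \<le> 3 * card (leafy_pieces V E)"
proof -
  let ?P = "pieces V E" and ?L = "leafy_pieces V E"
  have LP: "?L \<subseteq> ?P" by (auto simp: leafy_pieces_def)
  have "3 * card (?P - ?L) \<le> (\<Sum>C\<in>?P - ?L. exits V E C)"
    using sum_mono[of "?P - ?L" "\<lambda>_. 3" "exits V E"] exits_ge_3[OF assms]
    by (auto simp: leafy_pieces_def mult.commute)
  also have "\<dots> \<le> (\<Sum>C\<in>?P. exits V E C)" by (rule sum_mono2[OF finite_pieces]) auto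
  also have "\<dots> = 2 * card (midpoints V E)" by (rule sum_exits)
  finally show ?thesis
    using card_Diff_subset[OF finite_subset[OF LP finite_pieces] LP] card_mono[OF finite_pieces LP]
      card_pieces by linarith
qed

lemma path_between_pieces_meets_midpoint:
  assumes "C \<in> pieces V E" "D \<in> pieces V E" "C \<noteq> D" "is_path V E p" "hd p \<in> C" "last p \<in> D"
  shows "\<exists>i<length p. p ! i \<in> midpoints V E"
proof (rule ccontr)
  assume none: "\<not> ?thesis"
  have "set p \<subseteq> V - midpoints V E"
  proof
    fix x assume "x \<in> set p"
    then obtain i where "i < length p" "x = p ! i" by (auto simp: in_set_conv_nth)
    then show "x \<in> V - midpoints V E" using none is_path_nth_mem[OF assms(4)] by auto
  qed
  then have "set p \<subseteq> C"
    using components_path_subset[OF graph assms(1)[unfolded pieces_def] is_path_subset[OF assms(4)]]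
      assms(5) by blast
  then have "last p \<in> C \<inter> D" using assms(6) is_path_ne[OF assms(4)] by auto
  then show False using pieces_disjoint[OF assms(1-3)] by blast
qed

lemma leaves_in_distinct_pieces_far:
  assumes "C \<in> pieces V E" "D \<in> pieces V E" "C \<noteq> D" "u \<in> C" "v \<in> D" "degree V E v = 1"
  shows "20 \<le> dist V E u v"
proof (rule dist_ge)
  show "u \<in> V" "v \<in> V" using assms(1,2,4,5) pieces_subset by blast+
  fix p assume p: "is_path V E p" "hd p = u" "last p = v"
  then obtain i where "i < length p" "p ! i \<in> midpoints V E"
    using path_between_pieces_meets_midpoint[OF assms(1-3)] assms(4,5) by blast
  then show "20 + 1 \<le> length p"
    using midpoint_far_from_leaves[OF _ p(1)] p(3) assms(6) by fastforce
qed

lemma card_leafy_pieces_le_lam: "card (leafy_pieces V E) \<le> lam V E"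
proof -
  let ?L = "leafy_pieces V E"
  define leaf where "leaf C = (SOME v. v \<in> C \<and> degree V E v = 1)" for C
  have leaf: "leaf C \<in> C \<and> degree V E (leaf C) = 1" if C: "C \<in> ?L" for C
  proof -
    obtain v where "v \<in> C \<and> degree V E v = 1" using C by (auto simp: leafy_pieces_def)
    then show ?thesis unfolding leaf_def by (rule someI)
  qed
  have pieces: "C \<in> pieces V E" if "C \<in> ?L" for C
    using that by (simp add: leafy_pieces_def)
  have "inj_on leaf ?L"
  proof (rule inj_onI)
    fix C D assume C: "C \<in> ?L" and D: "D \<in> ?L" and "leaf C = leaf D"
    then have "leaf C \<in> C \<inter> D" using leaf[OF C] leaf[OF D] by simp
    then show "C = D" using pieces_disjoint[OF pieces[OF C] pieces[OF D]] by blast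
  qed
  moreover have "card (leaf ` ?L) \<le> lam V E"
  proof (rule card_le_lam)
    show "leaf ` ?L \<subseteq> leaves V E"
      using leaf pieces_subset[OF pieces] by (auto simp: leaves_def)
    show "separated V E 20 (leaf ` ?L)"
      unfolding separated_def
    proof (intro ballI impI)
      fix x y assume "x \<in> leaf ` ?L" "y \<in> leaf ` ?L" "x \<noteq> y"
      then obtain C D where "C \<in> ?L" "D \<in> ?L" "x = leaf C" "y = leaf D" "C \<noteq> D" by blast
      then show "20 \<le> dist V E x y"
        using leaves_in_distinct_pieces_far[OF pieces pieces] leaf by simp
    qed
  qed
  ultimately show ?thesis by (simp add: card_image)
qed

lemma card_long_segments_le: "2 \<le> card V \<Longrightarrow> card (long_segments V E) + 3 \<le> 3 * lam V E"
  using card_midpoints_le_leafy card_leafy_pieces_le_lam card_midpoints by fastforce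

end

section \<open>Counting bare paths\<close>

lemma real_div_ge: "real n / real m - 1 \<le> real (n div m)"
  using real_of_int_div3[of "int n" "int m"]
  by (metis of_int_of_nat_eq zdiv_int diff_le_eq add.commute)

lemma bare_chunk_count_arith:
  fixes n l K A k :: real
  assumes "2 \<le> K" "A \<le> 50 * K" "0 \<le> A" "0 \<le> n" "0 \<le> l" "l < n / (100 * K)" "K \<le> k" "k \<le> K + 1"
  shows "n / (90 * k) \<le> (n - A * l) / (k + 1) - 3 * l"
proof -
  have K: "0 < K" and "0 < k" using assms(1,7) by linarith+
  have "100 * K * l \<le> n" using assms(6) K by (simp add: field_simps)
  moreover have "A * l \<le> 50 * K * l" using assms(2,5) by (simp add: mult_right_mono)
  ultimately have "n / 2 \<le> n - A * l" by linarith
  then have "(n / 2) / (2 * K) \<le> (n - A * l) / (k + 1)"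
    using assms(1,4,8) \<open>0 < k\<close> K by (intro frac_le) auto
  moreover have "3 * l \<le> 3 * n / (100 * K)" using assms(6) by simp
  moreover have "n / (90 * k) \<le> n / (90 * K)" using assms(4,7) K by (intro divide_left_mono) auto
  moreover have "n / (90 * K) + 3 * n / (100 * K) \<le> (n / 2) / (2 * K)"
    using assms(4) K by (simp add: field_simps)
  ultimately show ?thesis by linarith
qed

context tree
begin

lemma card_deg2_le:
  assumes "2 \<le> card V" "\<forall>v\<in>V. degree V E v \<le> D"
  shows "card (deg2 V E) \<le> (\<Sum>X\<in>long_segments V E. card X) + 40 * D * card (V - deg2 V E)"
proof -
  let ?S = "segments V E" and ?L = "long_segments V E"
  have LS: "?L \<subseteq> ?S" by (auto simp: long_segments_def)
  have "card (deg2 V E) = card (\<Union>?S)" by (simp add: segments_def Union_components)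
  also have "\<dots> = (\<Sum>X\<in>?S. card X)"
  proof (rule card_Union_disjoint)
    show "pairwise disjnt ?S" using segments_disjoint by (auto simp: pairwise_def disjnt_def)
    show "finite X" if "X \<in> ?S" for X
      using finite_subset[OF segments_subset_deg2[OF that] finite_subset[OF deg2_subset finite_V]] .
  qed
  also have "\<dots> = (\<Sum>X\<in>?L. card X) + (\<Sum>X\<in>?S - ?L. card X)"
    using sum.subset_diff[OF LS finite_segments, of card] by simp
  also have "(\<Sum>X\<in>?S - ?L. card X) \<le> (\<Sum>X\<in>?S - ?L. 40)"
    by (rule sum_mono) (auto simp: long_segments_def)
  also have "\<dots> \<le> 40 * card ?S" using card_mono[OF finite_segments, of "?S - ?L"] by auto
  also have "\<dots> \<le> 40 * (D * card (V - deg2 V E))" using card_segments_le[OF assms] by simp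
  finally show ?thesis by simp
qed

lemma card_bare_chunks_ge:
  assumes "0 < m"
  shows "real (\<Sum>X\<in>long_segments V E. card X) / real m - real (card (long_segments V E))
    \<le> real (card (bare_chunks V E m))"
proof -
  let ?L = "long_segments V E"
  have "real (\<Sum>X\<in>?L. card X) / real m - real (card ?L) = (\<Sum>X\<in>?L. real (card X) / real m - 1)"
    by (simp add: sum_subtractf sum_divide_distrib)
  also have "\<dots> \<le> (\<Sum>X\<in>?L. real (card X div m))" by (rule sum_mono) (rule real_div_ge)
  also have "\<dots> \<le> (\<Sum>X\<in>segments V E. real (card X div m))"
    by (rule sum_mono2[OF finite_segments]) (auto simp: long_segments_def)
  also have "\<dots> = real (card (bare_chunks V E m))" by (simp add: card_bare_chunks[OF assms])
  finally show ?thesis .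
qed

lemma card_bare_chunks_lower_bound:
  assumes "2 \<le> card V" "\<forall>v\<in>V. degree V E v \<le> D" "0 < m"
  shows "(real (card V) - real (2 * (1 + 40 * D) * (D + 1) ^ 19) * real (lam V E)) / real m
      - 3 * real (lam V E) \<le> real (card (bare_chunks V E m))"
proof -
  let ?N = "card (V - deg2 V E)" and ?\<Sigma> = "\<Sum>X\<in>long_segments V E. card X"
  have "card V = ?N + card (deg2 V E)"
    using card_Diff_subset[OF finite_subset[OF deg2_subset finite_V] deg2_subset]
      card_mono[OF finite_V deg2_subset] by simp
  then have V: "card V \<le> ?\<Sigma> + (1 + 40 * D) * ?N" using card_deg2_le[OF assms(1,2)] by simp
  have "?N \<le> 2 * ((D + 1) ^ 19 * lam V E)"
    using card_non_deg2_le[OF assms(1)] card_leaves_le[OF assms(2)] by linarith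
  then have "(1 + 40 * D) * ?N \<le> (1 + 40 * D) * (2 * ((D + 1) ^ 19 * lam V E))"
    by (rule mult_le_mono2)
  also have "\<dots> = 2 * (1 + 40 * D) * (D + 1) ^ 19 * lam V E" by (simp only: mult_ac)
  finally have "card V \<le> ?\<Sigma> + 2 * (1 + 40 * D) * (D + 1) ^ 19 * lam V E" using V by linarith
  then have "real (card V) \<le> real ?\<Sigma> + real (2 * (1 + 40 * D) * (D + 1) ^ 19) * real (lam V E)"
    by (simp only: of_nat_add[symmetric] of_nat_mult[symmetric] of_nat_le_iff)
  then have "real (card V) - real (2 * (1 + 40 * D) * (D + 1) ^ 19) * real (lam V E) \<le> real ?\<Sigma>"
    by linarith
  then have "(real (card V) - real (2 * (1 + 40 * D) * (D + 1) ^ 19) * real (lam V E)) / real m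
      \<le> real ?\<Sigma> / real m" using assms(3) by (simp add: divide_right_mono)
  moreover have "real (card (long_segments V E)) \<le> 3 * real (lam V E)"
    using card_long_segments_le[OF assms(1)] by linarith
  ultimately show ?thesis using card_bare_chunks_ge[OF assms(3)] by linarith
qed

lemma kprime_ge_if_lam_small:
  assumes "2 \<le> card V" "\<forall>v\<in>V. degree V E v \<le> D"
    and "2 \<le> K" "real (2 * (1 + 40 * D) * (D + 1) ^ 19) \<le> 50 * K"
    and lam: "real (lam V E) < real (card V) / (100 * K)"
  shows "K \<le> real (kprime V E)"
proof -
  define k where "k = nat \<lceil>K\<rceil>"
  have k: "K \<le> real k" "real k \<le> K + 1" "0 < k"
    using assms(3) of_int_ceiling_le_add_one[of K] by (auto simp: k_def)
  let ?A = "real (2 * (1 + 40 * D) * (D + 1) ^ 19)"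
  have "real (card V) / (90 * real k) \<le> (real (card V) - ?A * real (lam V E)) / (real k + 1)
      - 3 * real (lam V E)"
    by (rule bare_chunk_count_arith[OF assms(3,4) _ _ _ _ k(1,2)]) (use lam in auto)
  also have "\<dots> \<le> real (card (bare_chunks V E (k + 1)))"
    using card_bare_chunks_lower_bound[OF assms(1,2), of "k + 1"] by (simp add: add.commute)
  finally have "real (card V) / (90 * real k) \<le> real (card (bare_chunks V E (k + 1)))" .
  then have "k \<le> kprime V E" by (rule kprime_ge[OF k(3)])
  then show ?thesis using k(1) by linarith
qed

end

theorem lemma2p3:
  fixes \<Delta> :: real
  assumes "\<Delta> > 0"
  shows "\<exists>N::nat. \<forall>n\<ge>N. \<forall>(V::nat set) E.
    is_tree V E \<and> card V = n \<and> (\<forall>v\<in>V. real (degree V E v) \<le> \<Delta>) \<longrightarrow>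
      (real (lam V E) \<ge> real n * ln (ln (real n)) / (10 ^ 5 * ln (real n))
       \<or> (10 ^ 3 * ln (real n) / ln (ln (real n)) \<le> kT V E \<and> kT V E < 10 ^ 2 * ln (real n))
       \<or> (10 ^ 2 * ln (real n) \<le> kT V E \<and> kT V E < ln (real n) ^ 2 / ln (ln (real n)) / 10 ^ 6)
       \<or> kT V E = ln (real n) ^ 2 / ln (ln (real n)) / 10 ^ 6)"
proof -
  define D where "D = nat \<lfloor>\<Delta>\<rfloor>"
  define K where "K n = 10 ^ 3 * ln (real n) / ln (ln (real n))" for n :: nat
  define cap where "cap n = ln (real n) ^ 2 / ln (ln (real n)) / 10 ^ 6" for n :: nat
  have "eventually (\<lambda>n. 2 \<le> n \<and> 0 < ln (ln (real n)) \<and> 2 \<le> K n \<and>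
      real (2 * (1 + 40 * D) * (D + 1) ^ 19) \<le> 50 * K n \<and> K n \<le> cap n) sequentially"
    unfolding K_def cap_def by (intro eventually_conj eventually_ge_at_top; real_asymp)
  then obtain N where N: "\<And>n. N \<le> n \<Longrightarrow> 2 \<le> n \<and> 0 < ln (ln (real n)) \<and> 2 \<le> K n \<and>
      real (2 * (1 + 40 * D) * (D + 1) ^ 19) \<le> 50 * K n \<and> K n \<le> cap n"
    by (auto simp: eventually_sequentially)
  have main: "real n / (100 * K n) \<le> real (lam V E) \<or> K n \<le> kT V E"
    if "N \<le> n" "is_tree V E" "card V = n" "\<forall>v\<in>V. real (degree V E v) \<le> \<Delta>" for n V E
  proof -
    interpret tree V E using that(2) by (simp add: tree_def)
    have "\<forall>v\<in>V. degree V E v \<le> D" using that(4) by (simp add: D_def le_nat_floor)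
    then show ?thesis
      using kprime_ge_if_lam_small[of D "K n"] N[OF that(1)] that(3) by (force simp: kT_def cap_def)
  qed
  have "real n * ln (ln (real n)) / (10 ^ 5 * ln (real n)) = real n / (100 * K n)" if "N \<le> n" for n
    using N[OF that] by (simp add: K_def)
  moreover have "kT V E \<le> cap (card V)" for V E by (simp add: kT_def cap_def)
  ultimately show ?thesis
    unfolding K_def[symmetric] cap_def[symmetric]
    using main by (intro exI[of _ N]) (smt (verit))
qed

end
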